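(* Let $m\ge1$ and let $\pi\in\mathfrak{S}_{3m}$ avoid $132$ and consist only of $3$-cycles, with element sets $\{a_i<b_i<c_i\}$, $i=1,\dots,m$, indexed so that $b_1<\dots<b_m$. Let $A=\{a_i\}$, $B=\{b_i\}$, let $D_\pi$ be the associated Dyck word and $X=(x_1,\dots,x_k)$ its free composition. Write $A=\bigcup_{j=1}^k A_j$ and $B=\bigcup_{j=1}^k B_j$, where the $A_j$ are consecutive (in the increasing order of $A$) subsets with every element of $A_j$ less than every element of $A_{j+1}$ and $|A_j|=x_{k-j+1}$, and the $B_j$ are consecutive subsets with every element of $B_j$ less than every element of $B_{j+1}$ and $|B_j|=x_j$. Then for every $i$ and $j$, if $b_i\in B_j$ then $a_i\in A_{k-j+1}$.
   Context: A permutation avoids $132$ if there are no indices $i<j<k$ with $\pi_i<\pi_k<\pi_j$. With $C=\{c_i\}$, the associated Dyck word $D_\pi$ is the word of length $2m$ obtained by listing the elements of $B\cup C$ in increasing order and writing $0$ for each element of $B$ and $1$ for each element of $C$. For a Dyck word $D$ of semilength $m$: indices $i,i+1$ are linked if the $i$-th and $(i+1)$-st $0$ of $D$ occupy adjacent positions and the $i$-th and $(i+1)$-st $1$ occupy adjacent positions; the free blocks are the maximal intervals of $\{1,\dots,m\}$ in which all consecutive indices are linked; the free composition $(x_1,\dots,x_k)$ lists the sizes of the free blocks from left to right. *)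

theory Defs
  imports "HOL-Combinatorics.Permutations"
begin

definition avoids132 :: "(nat \<Rightarrow> nat) \<Rightarrow> nat \<Rightarrow> bool" where
  "avoids132 p n \<longleftrightarrow>
     (\<forall>i j k. 1 \<le> i \<and> i < j \<and> j < k \<and> k \<le> n \<longrightarrow> \<not> (p i < p k \<and> p k < p j))"

definition only_3cycles :: "(nat \<Rightarrow> nat) \<Rightarrow> nat \<Rightarrow> bool" where
  "only_3cycles p n \<longleftrightarrow> (\<forall>x\<in>{1..n}. p x \<noteq> x \<and> (p ^^ 3) x = x)"

definition cyc :: "(nat \<Rightarrow> nat) \<Rightarrow> nat \<Rightarrow> nat set" where
  "cyc p x = {x, p x, p (p x)}"

definition setA :: "(nat \<Rightarrow> nat) \<Rightarrow> nat \<Rightarrow> nat set" where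
  "setA p n = {x\<in>{1..n}. x = Min (cyc p x)}"

definition setC :: "(nat \<Rightarrow> nat) \<Rightarrow> nat \<Rightarrow> nat set" where
  "setC p n = {x\<in>{1..n}. x = Max (cyc p x)}"

definition setB :: "(nat \<Rightarrow> nat) \<Rightarrow> nat \<Rightarrow> nat set" where
  "setB p n = {x\<in>{1..n}. x \<noteq> Min (cyc p x) \<and> x \<noteq> Max (cyc p x)}"

definition dyck_word :: "(nat \<Rightarrow> nat) \<Rightarrow> nat \<Rightarrow> nat list" where
  "dyck_word p n = map (\<lambda>y. if y \<in> setC p n then 1 else 0)
                     (sorted_list_of_set (setB p n \<union> setC p n))"

text \<open>0-based positions of the letter c in D; the i-th (1-based) occurrence is at index i-1.\<close>
definition letter_pos :: "nat \<Rightarrow> nat list \<Rightarrow> nat list" where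
  "letter_pos c D = filter (\<lambda>q. D ! q = c) [0..<length D]"

text \<open>Indices i, i+1 (1-based) are linked.\<close>
definition linked :: "nat list \<Rightarrow> nat \<Rightarrow> bool" where
  "linked D i \<longleftrightarrow>
     letter_pos 0 D ! i = letter_pos 0 D ! (i - 1) + 1 \<and>
     letter_pos 1 D ! i = letter_pos 1 D ! (i - 1) + 1"

definition free_blocks :: "nat list \<Rightarrow> nat \<Rightarrow> nat set set" where
  "free_blocks D m = {{l..r} | l r. 1 \<le> l \<and> l \<le> r \<and> r \<le> m \<and>
       (\<forall>i. l \<le> i \<and> i < r \<longrightarrow> linked D i) \<and>
       (1 < l \<longrightarrow> \<not> linked D (l - 1)) \<and>
       (r < m \<longrightarrow> \<not> linked D r)}"

definition free_composition :: "nat list \<Rightarrow> nat \<Rightarrow> nat list" where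
  "free_composition D m =
     map (\<lambda>l. card (THE S. S \<in> free_blocks D m \<and> Min S = l))
         (sorted_list_of_set (Min ` free_blocks D m))"

definition block :: "nat set \<Rightarrow> nat list \<Rightarrow> nat \<Rightarrow> nat set" where
  "block S sz j = {sorted_list_of_set S ! r | r.
       sum_list (take (j - 1) sz) \<le> r \<and> r < sum_list (take j sz)}"

end

theory Submission
  imports Defs
begin

text \<open>Write every cycle as \<open>a < b < c\<close>. Avoiding 132 forces any two cycles to interleave
  tightly: if \<open>a < a'\<close> then \<open>a' < b\<close>, and the order of the middle elements decides the order of
  the maxima. Hence \<open>A = {1..m}\<close>, and listing the cycles by their middle elements
  \<open>b\<^sub>1 < \<dots> < b\<^sub>m\<close> lists their maxima increasingly as well. If two cycles with middle elements
  \<open>b\<^sub>q < b\<^sub>q\<^sub>'\<close> had increasing minima, a third cycle would produce a 132 pattern as soon as one of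
  its maxima fell between \<open>b\<^sub>q\<close> and \<open>b\<^sub>q\<^sub>'\<close> or one of its middle elements between the
  corresponding maxima; so every index between \<open>q\<close> and \<open>q'\<close> would be linked in the Dyck word.
  Consequently all minima of cycles whose middle element lies in a later free block are smaller than
  those of earlier blocks, and counting places the minimum of a cycle whose middle element lies in
  the \<open>j\<close>-th block of \<open>B\<close> into the \<open>j\<close>-th block from the right of \<open>A\<close>.\<close>

section \<open>132-avoidance and ordered 3-cycles\<close>

definition ordered_3cycle :: "(nat \<Rightarrow> nat) \<Rightarrow> nat \<Rightarrow> nat \<Rightarrow> nat \<Rightarrow> bool" where
  "ordered_3cycle p a b c \<longleftrightarrow> a < b \<and> b < c \<and>
     (p a = b \<and> p b = c \<and> p c = a \<or> p a = c \<and> p c = b \<and> p b = a)"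

lemma avoids132D:
  assumes "avoids132 p n" "1 \<le> i" "i < j" "j < k" "k \<le> n" "p i < p k" "p k < p j"
  shows False
  using assms unfolding avoids132_def by blast

lemma avoids132_two_3cycles:
  assumes av: "avoids132 p n"
    and X: "ordered_3cycle p a b c" and Y: "ordered_3cycle p a' b' c'"
    and range: "1 \<le> a" "c \<le> n" "1 \<le> a'" "c' \<le> n"
    and disj: "{a, b, c} \<inter> {a', b', c'} = {}" and lt: "a < a'"
  shows "a' < b" and "b < b' \<Longrightarrow> b' < c \<and> c < c'" and "b' < b \<Longrightarrow> c' < c"
proof -
  have ne: "a' \<noteq> b" "b' \<noteq> c" "c' \<noteq> c" using disj by auto
  show "a' < b"
  proof (rule ccontr)
    assume "\<not> a' < b"
    with ne have "b < a'" by simp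
    with X Y range lt show False unfolding ordered_3cycle_def
      by (elim conjE disjE) (rule avoids132D[OF av, of a a' c'] avoids132D[OF av, of b a' c']; linarith)+
  qed
  show "b' < c \<and> c < c'" if "b < b'"
  proof (rule ccontr)
    assume "\<not> (b' < c \<and> c < c')"
    with ne have "c < b' \<or> c' < c" by auto
    with X Y range lt that show False unfolding ordered_3cycle_def
      by (elim conjE disjE) (rule avoids132D[OF av, of a b b'] avoids132D[OF av, of a b c']
            avoids132D[OF av, of b b' c] avoids132D[OF av, of b c' c] avoids132D[OF av, of a a' c']
            avoids132D[OF av, of b b' c'] avoids132D[OF av, of c b' c']; linarith)+
  qed
  show "c' < c" if "b' < b"
  proof (rule ccontr)
    assume "\<not> c' < c"
    with ne have "c < c'" by simp
    with X Y range lt that show False unfolding ordered_3cycle_def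
      by (elim conjE disjE) (rule avoids132D[OF av, of a a' b] avoids132D[OF av, of a b' b]
            avoids132D[OF av, of b c c']; linarith)+
  qed
qed

lemma avoids132_three_3cycles:
  assumes av: "avoids132 p n" and X: "ordered_3cycle p a b c"
    and Y: "ordered_3cycle p a' b' c'" and Z: "ordered_3cycle p a'' b'' c''"
    and range: "1 \<le> a" "c \<le> n" "1 \<le> a'" "c' \<le> n" "1 \<le> a''" "c'' \<le> n"
    and disj: "{a, b, c} \<inter> {a', b', c'} = {}" "{a, b, c} \<inter> {a'', b'', c''} = {}"
      "{a', b', c'} \<inter> {a'', b'', c''} = {}"
    and lt: "a < a'" "b < b'"
  shows "\<not> (b < c'' \<and> c'' < b')" and "\<not> (c < b'' \<and> b'' < c')"
proof -
  note two = avoids132_two_3cycles[OF av]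
  have disj': "{a'', b'', c''} \<inter> {a, b, c} = {}" "{a'', b'', c''} \<inter> {a', b', c'} = {}"
    using disj by blast+
  have XY: "a' < b" "b' < c" "c < c'"
    using two[OF X Y range(1-4) disj(1) lt(1)] lt(2) by auto
  have ne: "a \<noteq> a''" "a' \<noteq> a''" "b \<noteq> b''" using disj by auto
  show "\<not> (b < c'' \<and> c'' < b')"
  proof
    assume c'': "b < c'' \<and> c'' < b'"
    have "b'' < b"
    proof (rule ccontr)
      assume "\<not> b'' < b"
      with ne have "b < b''" by simp
      have "c < c''"
      proof (cases "a < a''")
        case True
        then show ?thesis using two(2)[OF X Z range(1,2,5,6) disj(2) True \<open>b < b''\<close>] by simp
      next
        case False
        with ne have "a'' < a" by simp
        then show ?thesis using two(3)[OF Z X range(5,6,1,2) disj'(1) _ \<open>b < b''\<close>] by simp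
      qed
      with c'' XY show False by simp
    qed
    have "a' < a''"
    proof (rule ccontr)
      assume "\<not> a' < a''"
      with ne have "a'' < a'" by simp
      from two(2)[OF Z Y range(5,6,3,4) disj'(2) this] \<open>b'' < b\<close> lt c'' show False by simp
    qed
    then have "a'' < b" using two(1)[OF X Z range(1,2,5,6) disj(2)] lt(1) by simp
    txt \<open>All nine points are now ordered; in each orientation of the three cycles one of the
      listed triples is a 132 pattern.\<close>
    with X Y Z range lt XY c'' \<open>b'' < b\<close> \<open>a' < a''\<close> show False
      unfolding ordered_3cycle_def
      by (elim conjE disjE) (rule avoids132D[OF av, of a a' b''] avoids132D[OF av, of a a' a'']
          avoids132D[OF av, of a a' b] avoids132D[OF av, of b b' c'] avoids132D[OF av, of b c'' b'];
          linarith)+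
  qed
  show "\<not> (c < b'' \<and> b'' < c')"
  proof
    assume b'': "c < b'' \<and> b'' < c'"
    have "c' < c''"
    proof (cases "a' < a''")
      case True
      then show ?thesis using two(2)[OF Y Z range(3-6) disj(3) True] XY b'' by simp
    next
      case False
      with ne have "a'' < a'" by simp
      then show ?thesis using two(3)[OF Z Y range(5,6,3,4) disj'(2)] XY b'' by simp
    qed
    have "a'' < a"
    proof (rule ccontr)
      assume "\<not> a'' < a"
      with ne have "a < a''" by simp
      from two(2)[OF X Z range(1,2,5,6) disj(2) this] XY lt b'' show False by simp
    qed
    with X Y Z range lt XY b'' \<open>c' < c''\<close> show False
      unfolding ordered_3cycle_def
      by (elim conjE disjE) (rule avoids132D[OF av, of c b'' c'] avoids132D[OF av, of b b' c'']
          avoids132D[OF av, of a a' b] avoids132D[OF av, of b b' c'] avoids132D[OF av, of b b'' c']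
          avoids132D[OF av, of a a' c'']; linarith)+
  qed
qed

section \<open>Permutations consisting of 3-cycles\<close>

definition cyc_min :: "(nat \<Rightarrow> nat) \<Rightarrow> nat \<Rightarrow> nat" where
  "cyc_min p x = Min (cyc p x)"

definition cyc_mid :: "(nat \<Rightarrow> nat) \<Rightarrow> nat \<Rightarrow> nat" where
  "cyc_mid p x = min (p (cyc_min p x)) (p (p (cyc_min p x)))"

definition cyc_max :: "(nat \<Rightarrow> nat) \<Rightarrow> nat \<Rightarrow> nat" where
  "cyc_max p x = max (p (cyc_min p x)) (p (p (cyc_min p x)))"

lemma cyc_mid_max_cong:
  "cyc_min p y = cyc_min p x \<Longrightarrow> cyc_mid p y = cyc_mid p x \<and> cyc_max p y = cyc_max p x"
  by (simp add: cyc_mid_def cyc_max_def)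

lemma finite_cyc: "finite (cyc p x)"
  by (simp add: cyc_def)

lemma self_mem_cyc: "x \<in> cyc p x"
  by (simp add: cyc_def)

locale three_cycle_perm =
  fixes p :: "nat \<Rightarrow> nat" and n :: nat
  assumes permutes: "p permutes {1..n}" and only_3cycles: "only_3cycles p n"
begin

lemma p_mem: "x \<in> {1..n} \<Longrightarrow> p x \<in> {1..n}"
  using permutes_in_image[OF permutes] by blast

lemma p_neq: "x \<in> {1..n} \<Longrightarrow> p x \<noteq> x"
  using only_3cycles by (simp add: only_3cycles_def)

lemma p_p_p: "x \<in> {1..n} \<Longrightarrow> p (p (p x)) = x"
  using only_3cycles by (simp add: only_3cycles_def numeral_3_eq_3)

lemma cyc_subset: "x \<in> {1..n} \<Longrightarrow> cyc p x \<subseteq> {1..n}"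
  using p_mem by (auto simp: cyc_def)

lemma cyc_eq_if_mem: "x \<in> {1..n} \<Longrightarrow> y \<in> cyc p x \<Longrightarrow> cyc p y = cyc p x"
  using p_p_p by (auto simp: cyc_def)

lemma cyc_cyc_min: "x \<in> {1..n} \<Longrightarrow> cyc p (cyc_min p x) = cyc p x"
  unfolding cyc_min_def by (rule cyc_eq_if_mem) (auto simp: cyc_def intro: Min_in)

lemma ordered_3cycle_cyc:
  assumes x: "x \<in> {1..n}"
  shows "ordered_3cycle p (cyc_min p x) (cyc_mid p x) (cyc_max p x)"
    and "cyc p x = {cyc_min p x, cyc_mid p x, cyc_max p x}"
proof -
  define a where "a = cyc_min p x"
  have a: "a \<in> {1..n}" using cyc_subset[OF x] cyc_cyc_min[OF x] self_mem_cyc[of a p]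
    unfolding a_def by blast
  have cyc_a: "cyc p x = {a, p a, p (p a)}" using cyc_cyc_min[OF x] by (simp add: a_def cyc_def)
  have "p a \<in> cyc p x" "p (p a) \<in> cyc p x" using cyc_a by auto
  then have "a \<le> p a" "a \<le> p (p a)"
    unfolding a_def cyc_min_def by (simp_all add: Min_le finite_cyc)
  moreover have "p a \<noteq> a" "p (p a) \<noteq> p a" "p (p a) \<noteq> a"
    using p_neq[OF a] p_neq[OF p_mem[OF a]] p_p_p[OF a] by metis+
  ultimately have lt: "a < p a" "a < p (p a)" "p a \<noteq> p (p a)" by auto
  have "cyc_mid p x = min (p a) (p (p a))" "cyc_max p x = max (p a) (p (p a))"
    by (simp_all add: a_def cyc_mid_def cyc_max_def)
  with lt p_p_p[OF a] show "ordered_3cycle p (cyc_min p x) (cyc_mid p x) (cyc_max p x)"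
    unfolding ordered_3cycle_def a_def[symmetric] by (auto simp: min_def max_def)
  show "cyc p x = {cyc_min p x, cyc_mid p x, cyc_max p x}"
    using cyc_a by (auto simp: a_def cyc_mid_def cyc_max_def min_def max_def)
qed

lemma cyc_parts_mem_cyc:
  assumes "x \<in> {1..n}"
  shows "cyc_min p x \<in> cyc p x" "cyc_mid p x \<in> cyc p x" "cyc_max p x \<in> cyc p x"
  using ordered_3cycle_cyc(2)[OF assms] by auto

lemma cyc_parts_of_mem:
  assumes x: "x \<in> {1..n}" and y: "y \<in> cyc p x"
  shows "y \<in> {1..n}" "cyc_min p y = cyc_min p x" "cyc_mid p y = cyc_mid p x"
    "cyc_max p y = cyc_max p x"
proof -
  show "y \<in> {1..n}" using cyc_subset[OF x] y by blast
  show min: "cyc_min p y = cyc_min p x"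
    using cyc_eq_if_mem[OF x y] by (simp add: cyc_min_def)
  show "cyc_mid p y = cyc_mid p x" "cyc_max p y = cyc_max p x"
    using cyc_mid_max_cong[OF min] by simp_all
qed

lemma cyc_parts_mem:
  assumes "x \<in> {1..n}"
  shows "cyc_min p x \<in> {1..n}" "cyc_mid p x \<in> {1..n}" "cyc_max p x \<in> {1..n}"
  using cyc_parts_of_mem(1)[OF assms] cyc_parts_mem_cyc[OF assms] by simp_all

lemma cyc_parts_lt:
  assumes "x \<in> {1..n}"
  shows "cyc_min p x < cyc_mid p x" "cyc_mid p x < cyc_max p x"
  using ordered_3cycle_cyc(1)[OF assms] by (simp_all add: ordered_3cycle_def)

lemma cyc_disjoint:
  assumes x: "x \<in> {1..n}" and y: "y \<in> {1..n}" and ne: "cyc_min p x \<noteq> cyc_min p y"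
  shows "cyc p x \<inter> cyc p y = {}"
proof (rule equals0I)
  fix z assume "z \<in> cyc p x \<inter> cyc p y"
  then have "z \<in> cyc p x" "z \<in> cyc p y" by auto
  with ne show False using cyc_parts_of_mem(2)[OF x] cyc_parts_of_mem(2)[OF y] by metis
qed

lemma mem_setA_iff: "x \<in> setA p n \<longleftrightarrow> x \<in> {1..n} \<and> cyc_min p x = x"
  by (auto simp: setA_def cyc_min_def)

lemma Max_cyc:
  assumes "x \<in> {1..n}" shows "Max (cyc p x) = cyc_max p x"
  using cyc_parts_lt[OF assms] by (simp add: ordered_3cycle_cyc(2)[OF assms])

lemma mem_setB_iff: "x \<in> setB p n \<longleftrightarrow> x \<in> {1..n} \<and> cyc_mid p x = x"
proof -
  have "x \<noteq> cyc_min p x \<and> x \<noteq> cyc_max p x \<longleftrightarrow> cyc_mid p x = x" if x: "x \<in> {1..n}"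
    using self_mem_cyc[of x p] ordered_3cycle_cyc(2)[OF x] cyc_parts_lt[OF x] by auto
  then show ?thesis by (auto simp: setB_def Max_cyc simp flip: cyc_min_def)
qed

lemma mem_setC_iff: "x \<in> setC p n \<longleftrightarrow> x \<in> {1..n} \<and> cyc_max p x = x"
  by (auto simp: setC_def Max_cyc)

lemma cyc_parts_in_sets:
  assumes "x \<in> {1..n}"
  shows "cyc_min p x \<in> setA p n" "cyc_mid p x \<in> setB p n" "cyc_max p x \<in> setC p n"
  using cyc_parts_of_mem[OF assms cyc_parts_mem_cyc(1)[OF assms]]
    cyc_parts_of_mem[OF assms cyc_parts_mem_cyc(2)[OF assms]]
    cyc_parts_of_mem[OF assms cyc_parts_mem_cyc(3)[OF assms]]
  by (simp_all add: mem_setA_iff mem_setB_iff mem_setC_iff)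

lemma bij_betw_cyc_mid: "bij_betw (cyc_mid p) (setA p n) (setB p n)"
proof (rule bij_betw_byWitness[where f' = "cyc_min p"])
  show "\<forall>a\<in>setA p n. cyc_min p (cyc_mid p a) = a"
    using cyc_parts_of_mem(2)[OF _ cyc_parts_mem_cyc(2)] by (simp add: mem_setA_iff)
  show "\<forall>b\<in>setB p n. cyc_mid p (cyc_min p b) = b"
    using cyc_parts_of_mem(3)[OF _ cyc_parts_mem_cyc(1)] by (simp add: mem_setB_iff)
  show "cyc_mid p ` setA p n \<subseteq> setB p n" "cyc_min p ` setB p n \<subseteq> setA p n"
    using cyc_parts_in_sets by (auto simp: mem_setA_iff mem_setB_iff)
qed

lemma bij_betw_cyc_max: "bij_betw (cyc_max p) (setA p n) (setC p n)"
proof (rule bij_betw_byWitness[where f' = "cyc_min p"])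
  show "\<forall>a\<in>setA p n. cyc_min p (cyc_max p a) = a"
    using cyc_parts_of_mem(2)[OF _ cyc_parts_mem_cyc(3)] by (simp add: mem_setA_iff)
  show "\<forall>c\<in>setC p n. cyc_max p (cyc_min p c) = c"
    using cyc_parts_of_mem(4)[OF _ cyc_parts_mem_cyc(1)] by (simp add: mem_setC_iff)
  show "cyc_max p ` setA p n \<subseteq> setC p n" "cyc_min p ` setC p n \<subseteq> setA p n"
    using cyc_parts_in_sets by (auto simp: mem_setA_iff mem_setC_iff)
qed

lemma interval_eq_setA_setB_setC: "{1..n} = setA p n \<union> setB p n \<union> setC p n"
proof
  show "{1..n} \<subseteq> setA p n \<union> setB p n \<union> setC p n"
  proof
    fix x assume x: "x \<in> {1..n}"
    then have "cyc_min p x = x \<or> cyc_mid p x = x \<or> cyc_max p x = x"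
      using ordered_3cycle_cyc(2)[OF x] self_mem_cyc[of x p] by auto
    with x show "x \<in> setA p n \<union> setB p n \<union> setC p n"
      unfolding Un_iff mem_setA_iff mem_setB_iff mem_setC_iff by blast
  qed
qed (auto simp: mem_setA_iff mem_setB_iff mem_setC_iff)

lemma setA_setB_setC_disjoint:
  "setA p n \<inter> setB p n = {}" "setA p n \<inter> setC p n = {}" "setB p n \<inter> setC p n = {}"
  using cyc_parts_lt by (fastforce simp: mem_setA_iff mem_setB_iff mem_setC_iff)+

lemma finite_setA: "finite (setA p n)" and finite_setB: "finite (setB p n)"
  and finite_setC: "finite (setC p n)"
proof -
  have "setA p n \<subseteq> {1..n}" "setB p n \<subseteq> {1..n}" "setC p n \<subseteq> {1..n}"
    by (auto simp: mem_setA_iff mem_setB_iff mem_setC_iff)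
  then show "finite (setA p n)" "finite (setB p n)" "finite (setC p n)"
    by (auto intro: finite_subset)
qed

lemma card_setA: "3 * card (setA p n) = n"
proof -
  have "n = card (setA p n \<union> setB p n \<union> setC p n)"
    by (simp flip: interval_eq_setA_setB_setC)
  also have "\<dots> = card (setA p n \<union> setB p n) + card (setC p n)"
    using finite_setA finite_setB finite_setC setA_setB_setC_disjoint by (intro card_Un_disjoint) auto
  also have "\<dots> = card (setA p n) + card (setB p n) + card (setC p n)"
    using finite_setA finite_setB setA_setB_setC_disjoint by (subst card_Un_disjoint) auto
  finally show ?thesis
    using bij_betw_same_card[OF bij_betw_cyc_mid] bij_betw_same_card[OF bij_betw_cyc_max] by simp
qed

end

section \<open>Sorted lists and blocks\<close>

lemma initial_segment_eq_atLeastAtMost: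
  fixes A :: "nat set"
  assumes sub: "A \<subseteq> {1..N}"
    and below: "\<And>a y. a \<in> A \<Longrightarrow> y \<in> {1..N} \<Longrightarrow> y \<notin> A \<Longrightarrow> a < y"
  shows "A = {1..card A}"
proof
  have fin: "finite A" using sub finite_subset by blast
  show "A \<subseteq> {1..card A}"
  proof
    fix a assume a: "a \<in> A"
    have "{1..a} \<subseteq> A"
    proof
      fix y assume y: "y \<in> {1..a}"
      then have "y \<in> {1..N}" using sub a by auto
      show "y \<in> A"
      proof (rule ccontr)
        assume "y \<notin> A"
        with below[OF a \<open>y \<in> {1..N}\<close>] y show False by simp
      qed
    qed
    then show "a \<in> {1..card A}" using card_mono[OF fin \<open>{1..a} \<subseteq> A\<close>] sub a by auto
  qed
  show "{1..card A} \<subseteq> A"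
  proof
    fix y assume y: "y \<in> {1..card A}"
    show "y \<in> A"
    proof (rule ccontr)
      assume "y \<notin> A"
      have "card A \<le> N" using card_mono[OF finite_atLeastAtMost sub] by simp
      then have "y \<in> {1..N}" using y by simp
      have "A \<subseteq> {1..<y}"
      proof
        fix a assume "a \<in> A"
        with below[OF this \<open>y \<in> {1..N}\<close> \<open>y \<notin> A\<close>] sub show "a \<in> {1..<y}" by auto
      qed
      then have "card A \<le> y - 1" using card_mono[of "{1..<y}" A] by simp
      with y show False by auto
    qed
  qed
qed

lemma strict_sorted_nth_less_iff:
  fixes xs :: "'a::linorder list"
  assumes "sorted_wrt (<) xs" "i < length xs" "k < length xs"
  shows "xs ! i < xs ! k \<longleftrightarrow> i < k"
proof
  assume "xs ! i < xs ! k"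
  then show "i < k"
    using sorted_wrt_nth_less[OF assms(1), of k i] assms(2) by (cases k i rule: linorder_cases) auto
qed (use sorted_wrt_nth_less[OF assms(1)] assms(3) in blast)

lemma sorted_list_of_set_filter:
  "finite A \<Longrightarrow> sorted_list_of_set {x \<in> A. P x} = filter P (sorted_list_of_set A)"
  by (rule sorted_distinct_set_unique) (auto simp: sorted_filter[where f = id, simplified])

lemma sorted_list_of_set_image_strict_mono:
  fixes f :: "'a::linorder \<Rightarrow> 'b::linorder"
  assumes "finite A" "strict_mono_on A f"
  shows "sorted_list_of_set (f ` A) = map f (sorted_list_of_set A)"
proof (rule sorted_distinct_set_unique)
  have "sorted_wrt (\<lambda>x y. f x < f y) (sorted_list_of_set A)"
    using sorted_wrt_mono_rel[OF _ strict_sorted_list_of_set[of A]] assms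
    by (auto simp: strict_mono_on_def)
  then have "sorted_wrt (<) (map f (sorted_list_of_set A))"
    by (simp add: sorted_wrt_map)
  then show "sorted (map f (sorted_list_of_set A))" "distinct (map f (sorted_list_of_set A))"
    by (auto simp: strict_sorted_iff)
qed (use assms in simp_all)

lemma sorted_list_of_set_nth_Suc:
  fixes S T :: "nat set"
  assumes S: "finite S" and ST: "S \<union> T = {lo..<hi}" and i: "Suc i < card S"
    and gap: "\<And>t. t \<in> T \<Longrightarrow> \<not> (sorted_list_of_set S ! i < t \<and> t < sorted_list_of_set S ! Suc i)"
  shows "sorted_list_of_set S ! Suc i = Suc (sorted_list_of_set S ! i)"
proof (rule ccontr)
  let ?xs = "sorted_list_of_set S"
  have sorted: "sorted_wrt (<) ?xs" and len: "length ?xs = card S" by simp_all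
  assume "?xs ! Suc i \<noteq> Suc (?xs ! i)"
  moreover have "?xs ! i < ?xs ! Suc i" using sorted_wrt_nth_less[OF sorted] i len by simp
  ultimately have w: "?xs ! i < Suc (?xs ! i)" "Suc (?xs ! i) < ?xs ! Suc i" by simp_all
  have "?xs ! i \<in> S" "?xs ! Suc i \<in> S"
    using i len S nth_mem[of i ?xs] nth_mem[of "Suc i" ?xs] by auto
  then have "?xs ! i \<in> {lo..<hi}" "?xs ! Suc i \<in> {lo..<hi}" using ST by blast+
  then have "Suc (?xs ! i) \<in> S \<union> T" using ST w by auto
  moreover have "Suc (?xs ! i) \<notin> S"
  proof
    assume "Suc (?xs ! i) \<in> S"
    then obtain k where k: "k < length ?xs" "?xs ! k = Suc (?xs ! i)"
      using S by (metis in_set_conv_nth set_sorted_list_of_set)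
    then have "i < k" "k < Suc i"
      using w i len strict_sorted_nth_less_iff[OF sorted] by (metis Suc_lessD)+
    then show False by simp
  qed
  ultimately show False using gap w by blast
qed

lemma sum_list_take_le:
  fixes xs :: "'a::canonically_ordered_monoid_add list"
  shows "sum_list (take j xs) \<le> sum_list xs"
  by (metis append_take_drop_id le_iff_add sum_list_append)

lemma sum_take_rev:
  fixes xs :: "nat list"
  assumes "t \<le> length xs"
  shows "sum_list (take t (rev xs)) = sum_list xs - sum_list (take (length xs - t) xs)"
proof -
  have "sum_list xs = sum_list (take (length xs - t) xs) + sum_list (drop (length xs - t) xs)"
    by (metis append_take_drop_id sum_list_append)
  then show ?thesis by (simp add: take_rev)
qed

lemma mem_block_atLeastAtMost:
  assumes "x \<in> {1..N}" "sum_list (take (j - 1) sz) < x" "x \<le> sum_list (take j sz)"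
  shows "x \<in> block {1..N} sz j"
proof -
  have "sorted_list_of_set {1..N} ! (x - 1) = x"
    using assms(1) by (simp add: atLeastLessThanSuc_atLeastAtMost[symmetric] del: upt_Suc)
  then show ?thesis
    unfolding block_def using assms(2,3) by (intro CollectI exI[of _ "x - 1"]) auto
qed

lemma mem_block_rev:
  assumes "sum_list sz = N" "j \<in> {1..length sz}" "x \<in> {1..N}"
    and "N - sum_list (take j sz) < x" "x \<le> N - sum_list (take (j - 1) sz)"
  shows "x \<in> block {1..N} (rev sz) (length sz - j + 1)"
proof (rule mem_block_atLeastAtMost[OF assms(3)])
  have "length sz - (length sz - j) = j" "length sz - (length sz - j + 1) = j - 1"
    "length sz - j + 1 \<le> length sz"
    using assms(2) by auto
  then show "sum_list (take (length sz - j + 1 - 1) (rev sz)) < x"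
    and "x \<le> sum_list (take (length sz - j + 1) (rev sz))"
    using sum_take_rev[of "length sz - j" sz] sum_take_rev[of "length sz - j + 1" sz] assms(1,4,5)
    by simp_all
qed

section \<open>Free compositions\<close>

definition block_starts :: "nat list \<Rightarrow> nat \<Rightarrow> nat set" where
  "block_starts D m = {l \<in> {1..m}. 1 < l \<longrightarrow> \<not> linked D (l - 1)}"

definition block_end :: "nat list \<Rightarrow> nat \<Rightarrow> nat \<Rightarrow> nat" where
  "block_end D m l = (LEAST r. l \<le> r \<and> (r = m \<or> \<not> linked D r))"

lemma block_end:
  assumes "l \<le> m"
  shows "l \<le> block_end D m l" and "block_end D m l \<le> m"
    and "block_end D m l = m \<or> \<not> linked D (block_end D m l)"
    and "\<And>i. l \<le> i \<Longrightarrow> i < block_end D m l \<Longrightarrow> linked D i"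
proof -
  have m: "l \<le> m \<and> (m = m \<or> \<not> linked D m)" using assms by simp
  have "l \<le> block_end D m l \<and> (block_end D m l = m \<or> \<not> linked D (block_end D m l))"
    unfolding block_end_def by (rule LeastI[of _ m]) (rule m)
  then show "l \<le> block_end D m l" "block_end D m l = m \<or> \<not> linked D (block_end D m l)"
    by simp_all
  show le: "block_end D m l \<le> m" unfolding block_end_def by (rule Least_le) (rule m)
  fix i assume i: "l \<le> i" "i < block_end D m l"
  with not_less_Least[OF i(2)[unfolded block_end_def]] le show "linked D i" by auto
qed

lemma free_blocks_eq: "free_blocks D m = (\<lambda>l. {l..block_end D m l}) ` block_starts D m"
proof (intro set_eqI iffI)
  fix S assume "S \<in> free_blocks D m"
  then obtain l r where S: "S = {l..r}" and lr: "1 \<le> l" "l \<le> r" "r \<le> m"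
    and inner: "\<forall>i. l \<le> i \<and> i < r \<longrightarrow> linked D i"
    and left: "1 < l \<longrightarrow> \<not> linked D (l - 1)" and right: "r < m \<longrightarrow> \<not> linked D r"
    unfolding free_blocks_def by blast
  have "block_end D m l = r"
  proof (rule antisym)
    show "block_end D m l \<le> r"
      unfolding block_end_def using lr right by (intro Least_le) auto
    show "r \<le> block_end D m l"
      using block_end[where l = l and m = m and D = D] lr inner by (metis le_trans linorder_not_le)
  qed
  moreover have "l \<in> block_starts D m" using lr left by (simp add: block_starts_def)
  ultimately show "S \<in> (\<lambda>l. {l..block_end D m l}) ` block_starts D m" using S by blast
next
  fix S assume "S \<in> (\<lambda>l. {l..block_end D m l}) ` block_starts D m"
  then obtain l where l: "1 \<le> l" "l \<le> m" "1 < l \<longrightarrow> \<not> linked D (l - 1)"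
    and S: "S = {l..block_end D m l}"
    by (auto simp: block_starts_def)
  with block_end[OF l(2), where D = D] show "S \<in> free_blocks D m"
    unfolding free_blocks_def by (intro CollectI exI[of _ l] exI[of _ "block_end D m l"]) auto
qed

lemma free_composition_eq:
  "free_composition D m = map (\<lambda>l. Suc (block_end D m l) - l) (sorted_list_of_set (block_starts D m))"
proof -
  have Min_block: "Min {l..block_end D m l} = l" if "l \<in> block_starts D m" for l
    using that block_end(1)[of l m D] by (intro Min_eqI) (auto simp: block_starts_def)
  then have starts: "Min ` free_blocks D m = block_starts D m"
    unfolding free_blocks_eq image_image by simp
  have "(THE S. S \<in> free_blocks D m \<and> Min S = l) = {l..block_end D m l}"
    if "l \<in> block_starts D m" for l
  proof (rule the_equality)
    show "{l..block_end D m l} \<in> free_blocks D m \<and> Min {l..block_end D m l} = l"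
      using that Min_block free_blocks_eq by blast
    fix S assume "S \<in> free_blocks D m \<and> Min S = l"
    then show "S = {l..block_end D m l}" unfolding free_blocks_eq using Min_block by auto
  qed
  then show ?thesis unfolding free_composition_def starts
    by (intro map_cong) (auto simp: block_starts_def)
qed

lemma finite_block_starts: "finite (block_starts D m)"
  by (rule finite_subset[of _ "{1..m}"]) (auto simp: block_starts_def)

lemma block_starts_next:
  assumes l: "l \<in> block_starts D m"
  shows "\<And>y. l < y \<Longrightarrow> y \<le> block_end D m l \<Longrightarrow> y \<notin> block_starts D m"
    and "block_end D m l < m \<Longrightarrow> Suc (block_end D m l) \<in> block_starts D m"
proof -
  have "l \<le> m" using l by (simp add: block_starts_def)
  note bounds = block_end[OF this, where D = D]
  show "y \<notin> block_starts D m" if "l < y" "y \<le> block_end D m l" for y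
    using that bounds(4)[of "y - 1"] l by (auto simp: block_starts_def)
  show "Suc (block_end D m l) \<in> block_starts D m" if "block_end D m l < m"
    using that bounds(1,3) l by (auto simp: block_starts_def)
qed

context
  fixes D :: "nat list" and m :: nat
  assumes m: "1 \<le> m"
begin

private abbreviation "Ls \<equiv> sorted_list_of_set (block_starts D m)"

private lemma Ls_nth_mem: "j < length Ls \<Longrightarrow> Ls ! j \<in> block_starts D m"
  using finite_block_starts nth_mem by (metis set_sorted_list_of_set)

private lemma Ls_index: "y \<in> block_starts D m \<Longrightarrow> \<exists>t < length Ls. Ls ! t = y"
  using finite_block_starts by (metis in_set_conv_nth set_sorted_list_of_set)

private lemma Ls_0: "0 < length Ls" "Ls ! 0 = 1"
proof -
  have "1 \<in> block_starts D m" using m by (simp add: block_starts_def)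
  then obtain t where t: "t < length Ls" "Ls ! t = 1" using Ls_index by blast
  then show "0 < length Ls" by simp
  have "1 \<le> Ls ! 0" using Ls_nth_mem[of 0] t by (simp add: block_starts_def)
  moreover have "Ls ! 0 \<le> Ls ! t" using sorted_nth_mono[of Ls 0 t] t by simp
  ultimately show "Ls ! 0 = 1" using t by simp
qed

private lemma Ls_Suc:
  assumes j: "j < length Ls"
  shows "Suc j < length Ls \<Longrightarrow> Ls ! Suc j = Suc (block_end D m (Ls ! j))"
    and "Suc j = length Ls \<Longrightarrow> block_end D m (Ls ! j) = m"
proof -
  have sorted: "sorted_wrt (<) Ls" by simp
  have l: "Ls ! j \<in> block_starts D m" by (rule Ls_nth_mem[OF j])
  then have lm: "Ls ! j \<le> m" by (simp add: block_starts_def)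
  have later: "j < t" if "t < length Ls" "Ls ! t = Suc (block_end D m (Ls ! j))" for t
    using that strict_sorted_nth_less_iff[OF sorted j that(1)] block_end(1)[OF lm, where D = D]
    by simp
  show "Ls ! Suc j = Suc (block_end D m (Ls ! j))" if sj: "Suc j < length Ls"
  proof -
    have gt: "Ls ! j < Ls ! Suc j" using sorted_wrt_nth_less[OF sorted] sj by simp
    have next_mem: "Ls ! Suc j \<in> block_starts D m" by (rule Ls_nth_mem[OF sj])
    then have ge: "Suc (block_end D m (Ls ! j)) \<le> Ls ! Suc j"
      using block_starts_next(1)[OF l gt] by force
    then have "block_end D m (Ls ! j) < m" using next_mem by (simp add: block_starts_def)
    then obtain t where t: "t < length Ls" "Ls ! t = Suc (block_end D m (Ls ! j))"
      using Ls_index block_starts_next(2)[OF l] by blast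
    then have "Suc j \<le> t" using later by (simp add: Suc_le_eq)
    then have "Ls ! Suc j \<le> Ls ! t" using sorted_nth_mono[of Ls "Suc j" t] t(1) by simp
    with ge t(2) show ?thesis by simp
  qed
  show "block_end D m (Ls ! j) = m" if "Suc j = length Ls"
  proof (rule ccontr)
    assume "block_end D m (Ls ! j) \<noteq> m"
    then have "block_end D m (Ls ! j) < m" using block_end(2)[OF lm, where D = D] by simp
    then obtain t where "t < length Ls" "Ls ! t = Suc (block_end D m (Ls ! j))"
      using Ls_index block_starts_next(2)[OF l] by blast
    with later that show False by fastforce
  qed
qed

private lemma sum_take_free_composition:
  assumes "j \<le> length (free_composition D m)"
  shows "sum_list (take j (free_composition D m))
    = (if j < length (free_composition D m) then Ls ! j - 1 else m)"
  using assms
proof (induction j)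
  case 0
  then show ?case using Ls_0 by (simp add: free_composition_eq)
next
  case (Suc j)
  have j: "j < length Ls" using Suc.prems by (simp add: free_composition_eq)
  have "Ls ! j \<le> m" "1 \<le> Ls ! j" using Ls_nth_mem[OF j] by (simp_all add: block_starts_def)
  moreover have "Ls ! j \<le> block_end D m (Ls ! j)" using block_end(1) \<open>Ls ! j \<le> m\<close> by blast
  moreover have "sum_list (take (Suc j) (free_composition D m))
      = sum_list (take j (free_composition D m)) + (Suc (block_end D m (Ls ! j)) - Ls ! j)"
    using j by (simp add: take_Suc_conv_app_nth free_composition_eq)
  ultimately have "sum_list (take (Suc j) (free_composition D m)) = block_end D m (Ls ! j)"
    using Suc j by (simp add: free_composition_eq)
  then show ?case
    using Ls_Suc[OF j] Suc.prems by (simp add: free_composition_eq)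
qed

lemma sum_list_free_composition: "sum_list (free_composition D m) = m"
  using sum_take_free_composition[of "length (free_composition D m)"] by simp

lemma free_composition_cut:
  assumes "0 < j" "j < length (free_composition D m)"
  defines "s \<equiv> sum_list (take j (free_composition D m))"
  shows "1 \<le> s" and "s < m" and "\<not> linked D s"
proof -
  have j: "j < length Ls" using assms(2) by (simp add: free_composition_eq)
  have s: "s = Ls ! j - 1" using sum_take_free_composition[of j] assms by simp
  have "Ls ! 0 < Ls ! j" using sorted_wrt_nth_less[of "(<)" Ls 0 j] assms(1) j by simp
  then have "1 < Ls ! j" using Ls_0 by simp
  with Ls_nth_mem[OF j] s show "1 \<le> s" "s < m" "\<not> linked D s"
    by (auto simp: block_starts_def)
qed

end

lemma letter_pos_map_upt:
  "letter_pos c (map f [s..<t]) = map (\<lambda>y. y - s) (filter (\<lambda>y. f y = c) [s..<t])"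
proof -
  have upt: "[0..<t - s] = map (\<lambda>y. y - s) [s..<t]"
    by (rule nth_equalityI) auto
  have "letter_pos c (map f [s..<t]) = filter (\<lambda>q. map f [s..<t] ! q = c) (map (\<lambda>y. y - s) [s..<t])"
    unfolding letter_pos_def upt[symmetric] by simp
  also have "\<dots> = map (\<lambda>y. y - s) (filter (\<lambda>y. f y = c) [s..<t])"
    unfolding filter_map by (intro arg_cong[where f = "map _"] filter_cong) auto
  finally show ?thesis .
qed

lemma letter_pos_indicator_word:
  assumes "B \<inter> C = {}" "B \<union> C = {s..<t}"
  defines "w \<equiv> map (\<lambda>y. if y \<in> C then 1 else 0) [s..<t]"
  shows "letter_pos 0 w = map (\<lambda>y. y - s) (sorted_list_of_set B)"
    and "letter_pos 1 w = map (\<lambda>y. y - s) (sorted_list_of_set C)"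
proof -
  have "B = {y \<in> {s..<t}. (if y \<in> C then 1 else 0) = (0::nat)}"
    "C = {y \<in> {s..<t}. (if y \<in> C then 1 else 0) = (1::nat)}"
    using assms(1,2) by auto
  then show "letter_pos 0 w = map (\<lambda>y. y - s) (sorted_list_of_set B)"
    "letter_pos 1 w = map (\<lambda>y. y - s) (sorted_list_of_set C)"
    unfolding w_def letter_pos_map_upt
    by (metis finite_atLeastLessThan sorted_list_of_set_filter sorted_list_of_set_range)+
qed

section \<open>Minima of the cycles across free blocks\<close>

locale three_cycle_132 = three_cycle_perm p "3 * m" for p :: "nat \<Rightarrow> nat" and m :: nat +
  assumes avoids132: "avoids132 p (3 * m)"
begin

lemma cyc_parts_order:
  assumes x: "x \<in> {1..3 * m}" and y: "y \<in> {1..3 * m}" and lt: "cyc_min p x < cyc_min p y"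
  shows "cyc_min p y < cyc_mid p x"
    and "cyc_mid p x < cyc_mid p y \<Longrightarrow> cyc_mid p y < cyc_max p x \<and> cyc_max p x < cyc_max p y"
    and "cyc_mid p y < cyc_mid p x \<Longrightarrow> cyc_max p y < cyc_max p x"
proof -
  have "{cyc_min p x, cyc_mid p x, cyc_max p x} \<inter> {cyc_min p y, cyc_mid p y, cyc_max p y} = {}"
    using cyc_disjoint[OF x y] lt by (simp add: ordered_3cycle_cyc(2)[OF x] ordered_3cycle_cyc(2)[OF y])
  note two = avoids132_two_3cycles[OF avoids132 ordered_3cycle_cyc(1)[OF x] ordered_3cycle_cyc(1)[OF y]
      _ _ _ _ this lt]
  show "cyc_min p y < cyc_mid p x"
    and "cyc_mid p x < cyc_mid p y \<Longrightarrow> cyc_mid p y < cyc_max p x \<and> cyc_max p x < cyc_max p y"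
    and "cyc_mid p y < cyc_mid p x \<Longrightarrow> cyc_max p y < cyc_max p x"
    using two cyc_parts_mem[OF x] cyc_parts_mem[OF y] by auto
qed

lemma no_cyc_part_between:
  assumes x: "x \<in> {1..3 * m}" and y: "y \<in> {1..3 * m}" and z: "z \<in> {1..3 * m}"
    and lt: "cyc_min p x < cyc_min p y" "cyc_mid p x < cyc_mid p y"
  shows "\<not> (cyc_mid p x < cyc_max p z \<and> cyc_max p z < cyc_mid p y)"
    and "\<not> (cyc_max p x < cyc_mid p z \<and> cyc_mid p z < cyc_max p y)"
proof -
  have xy: "cyc_mid p y < cyc_max p x" "cyc_max p x < cyc_max p y"
    using cyc_parts_order(2)[OF x y lt] by auto
  consider "cyc_min p z = cyc_min p x" | "cyc_min p z = cyc_min p y"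
    | "cyc_min p z \<noteq> cyc_min p x" "cyc_min p z \<noteq> cyc_min p y" by blast
  then have "\<not> (cyc_mid p x < cyc_max p z \<and> cyc_max p z < cyc_mid p y) \<and>
      \<not> (cyc_max p x < cyc_mid p z \<and> cyc_mid p z < cyc_max p y)"
  proof cases
    case 1
    then show ?thesis using cyc_mid_max_cong[OF 1] cyc_parts_lt[OF x] xy by auto
  next
    case 2
    then show ?thesis using cyc_mid_max_cong[OF 2] cyc_parts_lt[OF y] xy by auto
  next
    case 3
    have "cyc p x \<inter> cyc p y = {}" "cyc p x \<inter> cyc p z = {}" "cyc p y \<inter> cyc p z = {}"
      using cyc_disjoint x y z lt(1) 3 by (metis less_irrefl)+
    then show ?thesis
      using avoids132_three_3cycles[OF avoids132 ordered_3cycle_cyc(1)[OF x] ordered_3cycle_cyc(1)[OF y]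
          ordered_3cycle_cyc(1)[OF z]] cyc_parts_mem[OF x] cyc_parts_mem[OF y] cyc_parts_mem[OF z] lt
      by (simp add: ordered_3cycle_cyc(2)[OF x] ordered_3cycle_cyc(2)[OF y] ordered_3cycle_cyc(2)[OF z])
  qed
  then show "\<not> (cyc_mid p x < cyc_max p z \<and> cyc_max p z < cyc_mid p y)"
    and "\<not> (cyc_max p x < cyc_mid p z \<and> cyc_mid p z < cyc_max p y)" by auto
qed

lemma setA_less:
  assumes a: "a \<in> setA p (3 * m)" and y: "y \<in> {1..3 * m}" "y \<notin> setA p (3 * m)"
  shows "a < y"
proof -
  have a': "a \<in> {1..3 * m}" "cyc_min p a = a" using a by (simp_all add: mem_setA_iff)
  have "cyc_mid p y \<le> y"
    using y interval_eq_setA_setB_setC cyc_parts_lt[OF y(1)] by (auto simp: mem_setB_iff mem_setC_iff)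
  moreover have "a < cyc_mid p y"
  proof (cases "cyc_min p y < a")
    case True
    then show ?thesis using cyc_parts_order(1)[OF y(1) a'(1)] a'(2) by simp
  next
    case False
    then show ?thesis using cyc_parts_lt(1)[OF y(1)] by simp
  qed
  ultimately show ?thesis by simp
qed

lemma setA_eq: "setA p (3 * m) = {1..m}"
proof -
  have "card (setA p (3 * m)) = m" using card_setA by simp
  moreover have "setA p (3 * m) = {1..card (setA p (3 * m))}"
    by (rule initial_segment_eq_atLeastAtMost[of _ "3 * m"]) (auto simp: mem_setA_iff setA_less)
  ultimately show ?thesis by simp
qed

lemma setB_Un_setC: "setB p (3 * m) \<union> setC p (3 * m) = {Suc m..<Suc (3 * m)}"
proof -
  have "{Suc m..<Suc (3 * m)} = {1..3 * m} - setA p (3 * m)"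
    unfolding setA_eq by auto
  also have "\<dots> = (setB p (3 * m) \<union> setC p (3 * m)) - setA p (3 * m)"
    using interval_eq_setA_setB_setC by blast
  also have "\<dots> = setB p (3 * m) \<union> setC p (3 * m)"
    using setA_setB_setC_disjoint by blast
  finally show ?thesis by (rule sym)
qed

abbreviation Bs :: "nat list" where "Bs \<equiv> sorted_list_of_set (setB p (3 * m))"
abbreviation Cs :: "nat list" where "Cs \<equiv> sorted_list_of_set (setC p (3 * m))"

lemma card_setB: "card (setB p (3 * m)) = m"
  using card_setA bij_betw_same_card[OF bij_betw_cyc_mid] by simp

lemma card_setC: "card (setC p (3 * m)) = m"
  using card_setA bij_betw_same_card[OF bij_betw_cyc_max] by simp

lemma Bs_nth_mem: "q < m \<Longrightarrow> Bs ! q \<in> setB p (3 * m)"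
  using card_setB finite_setB by (metis length_sorted_list_of_set nth_mem set_sorted_list_of_set)

lemma inj_on_cyc_min_setB: "inj_on (cyc_min p) (setB p (3 * m))"
proof (rule inj_onI)
  fix b b' assume "b \<in> setB p (3 * m)" "b' \<in> setB p (3 * m)" "cyc_min p b = cyc_min p b'"
  then show "b = b'" using cyc_mid_max_cong[of p b b'] by (simp add: mem_setB_iff)
qed

lemma strict_mono_on_cyc_max: "strict_mono_on (setB p (3 * m)) (cyc_max p)"
proof (rule strict_mono_onI)
  fix b b' assume "b \<in> setB p (3 * m)" "b' \<in> setB p (3 * m)" "b < b'"
  moreover from this have "cyc_min p b \<noteq> cyc_min p b'"
    using inj_on_cyc_min_setB by (auto dest: inj_onD)
  ultimately show "cyc_max p b < cyc_max p b'"
    using cyc_parts_order(2) cyc_parts_order(3) by (auto simp: mem_setB_iff linorder_neq_iff)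
qed

lemma Cs_eq: "Cs = map (cyc_max p) Bs"
proof -
  have "cyc_max p ` setB p (3 * m) = setC p (3 * m)"
  proof
    show "cyc_max p ` setB p (3 * m) \<subseteq> setC p (3 * m)"
      using cyc_parts_in_sets(3) by (auto simp: mem_setB_iff)
    show "setC p (3 * m) \<subseteq> cyc_max p ` setB p (3 * m)"
    proof
      fix c assume c: "c \<in> setC p (3 * m)"
      then have "c \<in> {1..3 * m}" "cyc_max p c = c" by (simp_all add: mem_setC_iff)
      then show "c \<in> cyc_max p ` setB p (3 * m)"
        using cyc_parts_in_sets(2) cyc_parts_of_mem(4)[OF _ cyc_parts_mem_cyc(2)] by (metis image_eqI)
    qed
  qed
  then show ?thesis
    using sorted_list_of_set_image_strict_mono[OF finite_setB strict_mono_on_cyc_max] by simp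
qed

lemma Cs_nth_mem: "q < m \<Longrightarrow> Cs ! q \<in> setC p (3 * m)"
  using card_setC finite_setC by (metis length_sorted_list_of_set nth_mem set_sorted_list_of_set)

lemma linked_dyck_word_iff:
  assumes "1 \<le> i" "i < m"
  shows "linked (dyck_word p (3 * m)) i \<longleftrightarrow> Bs ! i = Suc (Bs ! (i - 1)) \<and> Cs ! i = Suc (Cs ! (i - 1))"
proof -
  have word: "dyck_word p (3 * m) = map (\<lambda>y. if y \<in> setC p (3 * m) then 1 else 0) [Suc m..<Suc (3 * m)]"
    unfolding dyck_word_def setB_Un_setC by simp
  note pos = letter_pos_indicator_word[OF setA_setB_setC_disjoint(3) setB_Un_setC, folded word]
  have "i - 1 < m" using assms by simp
  then have "Bs ! i \<in> setB p (3 * m)" "Bs ! (i - 1) \<in> setB p (3 * m)"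
    "Cs ! i \<in> setC p (3 * m)" "Cs ! (i - 1) \<in> setC p (3 * m)"
    using Bs_nth_mem Cs_nth_mem assms by simp_all
  then have "Suc m \<le> Bs ! i" "Suc m \<le> Bs ! (i - 1)" "Suc m \<le> Cs ! i" "Suc m \<le> Cs ! (i - 1)"
    using setB_Un_setC by auto
  moreover have "letter_pos 0 (dyck_word p (3 * m)) ! k = Bs ! k - Suc m"
    "letter_pos 1 (dyck_word p (3 * m)) ! k = Cs ! k - Suc m" if "k < m" for k
    using that unfolding pos by (simp_all add: card_setB card_setC)
  moreover have "x - Suc m = Suc (y - Suc m) \<longleftrightarrow> x = Suc y" if "Suc m \<le> x" "Suc m \<le> y" for x y
    using that by arith
  ultimately show ?thesis
    using assms \<open>i - 1 < m\<close> unfolding linked_def by simp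
qed

text \<open>Were the minima increasing, no maximum could lie between the two middle elements and no
  middle element between the two maxima; both gaps at the cut would then be closed, i.e. it would be
  linked.\<close>

lemma cyc_min_decreasing_across_cut:
  assumes cut: "\<not> linked (dyck_word p (3 * m)) l" "1 \<le> l" "l < m"
    and q: "q < l" "l \<le> q'" "q' < m"
  shows "cyc_min p (Bs ! q') < cyc_min p (Bs ! q)"
proof (rule ccontr)
  assume not_lt: "\<not> cyc_min p (Bs ! q') < cyc_min p (Bs ! q)"
  have sorted: "sorted_wrt (<) Bs" "sorted Cs" by simp_all
  have B: "Bs ! q \<in> setB p (3 * m)" "Bs ! q' \<in> setB p (3 * m)" using Bs_nth_mem q by simp_all
  then have mid: "Bs ! q \<in> {1..3 * m}" "Bs ! q' \<in> {1..3 * m}"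
    "cyc_mid p (Bs ! q) = Bs ! q" "cyc_mid p (Bs ! q') = Bs ! q'"
    by (simp_all add: mem_setB_iff)
  have "Bs ! q < Bs ! q'"
    using sorted_wrt_nth_less[OF sorted(1), of q q'] q card_setB by simp
  moreover from this have "cyc_min p (Bs ! q) \<noteq> cyc_min p (Bs ! q')"
    using inj_on_cyc_min_setB B by (auto dest: inj_onD)
  ultimately have lt: "cyc_min p (Bs ! q) < cyc_min p (Bs ! q')" "cyc_mid p (Bs ! q) < cyc_mid p (Bs ! q')"
    using not_lt mid by simp_all
  have Bs_mono: "Bs ! q \<le> Bs ! (l - 1)" "Bs ! l \<le> Bs ! q'"
    using sorted_nth_mono[OF strict_sorted_imp_sorted[OF sorted(1)]] q card_setB by simp_all
  have Cs_mono: "Cs ! q \<le> Cs ! (l - 1)" "Cs ! l \<le> Cs ! q'"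
    using sorted_nth_mono[OF sorted(2)] q card_setB by (simp_all add: Cs_eq)
  have card: "Suc (l - 1) < card (setB p (3 * m))" "Suc (l - 1) < card (setC p (3 * m))"
    using cut(2,3) card_setB card_setC by simp_all
  have "Bs ! l = Suc (Bs ! (l - 1))"
  proof -
    have "\<not> (Bs ! (l - 1) < c \<and> c < Bs ! Suc (l - 1))" if c: "c \<in> setC p (3 * m)" for c
    proof -
      from c have "c \<in> {1..3 * m}" "cyc_max p c = c" by (simp_all add: mem_setC_iff)
      with no_cyc_part_between(1)[OF mid(1,2) this(1) lt] mid(3,4)
      have "\<not> (Bs ! q < c \<and> c < Bs ! q')" by simp
      with Bs_mono cut(2) show ?thesis by auto
    qed
    then show ?thesis
      using sorted_list_of_set_nth_Suc[OF finite_setB setB_Un_setC card(1)] cut(2) by simp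
  qed
  moreover have "Cs ! l = Suc (Cs ! (l - 1))"
  proof -
    have "\<not> (Cs ! (l - 1) < b \<and> b < Cs ! Suc (l - 1))" if b: "b \<in> setB p (3 * m)" for b
    proof -
      from b have "b \<in> {1..3 * m}" "cyc_mid p b = b" by (simp_all add: mem_setB_iff)
      with no_cyc_part_between(2)[OF mid(1,2) this(1) lt]
      have "\<not> (Cs ! q < b \<and> b < Cs ! q')" using q card_setB by (simp add: Cs_eq)
      with Cs_mono cut(2) show ?thesis by auto
    qed
    then show ?thesis
      using sorted_list_of_set_nth_Suc[OF finite_setC _ card(2), of "setB p (3 * m)"] setB_Un_setC cut(2)
      by (simp add: Un_commute)
  qed
  ultimately show False using cut linked_dyck_word_iff by simp
qed

lemma cyc_min_Bs_mem: "q < m \<Longrightarrow> cyc_min p (Bs ! q) \<in> {1..m}"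
  using Bs_nth_mem cyc_parts_in_sets(1) setA_eq by (auto simp: mem_setB_iff)

lemma inj_on_cyc_min_Bs: "inj_on (\<lambda>q. cyc_min p (Bs ! q)) {..<m}"
  using inj_on_cyc_min_setB Bs_nth_mem inj_on_nth[of Bs "{..<m}"] card_setB
  by (simp add: inj_on_def)

lemma cyc_min_Bs_lower_bound:
  assumes "1 \<le> m" "j \<le> length (free_composition (dyck_word p (3 * m)) m)"
    and "r < sum_list (take j (free_composition (dyck_word p (3 * m)) m))"
  shows "m - sum_list (take j (free_composition (dyck_word p (3 * m)) m)) < cyc_min p (Bs ! r)"
proof -
  let ?X = "free_composition (dyck_word p (3 * m)) m" and ?f = "\<lambda>q. cyc_min p (Bs ! q)"
  define l where "l = sum_list (take j ?X)"
  have "r < m"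
    using assms(3) sum_list_take_le[of j ?X] sum_list_free_composition[OF assms(1)] by simp
  show ?thesis
  proof (cases "j = length ?X")
    case True
    then show ?thesis using sum_list_free_composition[OF assms(1)] cyc_min_Bs_mem[OF \<open>r < m\<close>] by simp
  next
    case False
    then have "0 < j" "j < length ?X" using assms(2,3) by (auto intro: gr0I)
    note cut = free_composition_cut[OF assms(1) this, folded l_def]
    have "?f ` {l..<m} \<subseteq> {1..<?f r}"
      using cyc_min_decreasing_across_cut[OF cut(3,1,2)] cyc_min_Bs_mem assms(3) l_def by force
    moreover have "inj_on ?f {l..<m}" by (rule inj_on_subset[OF inj_on_cyc_min_Bs]) auto
    ultimately have "card {l..<m} \<le> card {1..<?f r}" by (intro card_inj_on_le[of ?f]) auto
    then have "m - l \<le> ?f r - 1" by simp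
    then show ?thesis using cyc_min_Bs_mem[OF \<open>r < m\<close>] l_def by auto
  qed
qed

lemma cyc_min_Bs_upper_bound:
  assumes "1 \<le> m" "i < length (free_composition (dyck_word p (3 * m)) m)"
    and "sum_list (take i (free_composition (dyck_word p (3 * m)) m)) \<le> r" "r < m"
  shows "cyc_min p (Bs ! r) \<le> m - sum_list (take i (free_composition (dyck_word p (3 * m)) m))"
proof (cases "i = 0")
  case True
  then show ?thesis using cyc_min_Bs_mem[OF assms(4)] by simp
next
  case False
  let ?X = "free_composition (dyck_word p (3 * m)) m" and ?f = "\<lambda>q. cyc_min p (Bs ! q)"
  define l where "l = sum_list (take i ?X)"
  have "0 < i" using False by simp
  note cut = free_composition_cut[OF assms(1) this assms(2), folded l_def]
  have "?f ` {..<l} \<subseteq> {?f r<..m}"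
    using cyc_min_decreasing_across_cut[OF cut(3,1,2)] cyc_min_Bs_mem assms(3,4) l_def cut(2) by force
  moreover have "inj_on ?f {..<l}" by (rule inj_on_subset[OF inj_on_cyc_min_Bs]) (use cut(2) in auto)
  ultimately have "card {..<l} \<le> card {?f r<..m}" by (intro card_inj_on_le[of ?f]) auto
  then have "l \<le> m - ?f r" by simp
  then show ?thesis using cyc_min_Bs_mem[OF assms(4)] l_def by auto
qed

end

theorem lemma4p3:
  fixes p :: "nat \<Rightarrow> nat" and m :: nat
  assumes "m \<ge> 1"
    and "p permutes {1..3*m}"
    and "avoids132 p (3*m)"
    and "only_3cycles p (3*m)"
  defines "X \<equiv> free_composition (dyck_word p (3*m)) m"
  defines "k \<equiv> length X"
  shows "\<forall>b \<in> setB p (3*m). \<forall>j \<in> {1..k}.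
           b \<in> block (setB p (3*m)) X j \<longrightarrow>
           Min (cyc p b) \<in> block (setA p (3*m)) (rev X) (k - j + 1)"
proof (intro ballI impI)
  fix b j
  assume j: "j \<in> {1..k}" and b: "b \<in> block (setB p (3*m)) X j"
  interpret three_cycle_132 p m
    using assms(2-4) by unfold_locales
  obtain r where r: "b = Bs ! r" "sum_list (take (j - 1) X) \<le> r" "r < sum_list (take j X)"
    using b unfolding block_def by blast
  have sum_X: "sum_list X = m"
    unfolding X_def by (rule sum_list_free_composition[OF assms(1)])
  then have "r < m" using r(3) sum_list_take_le[of j X] by simp
  have "j - 1 < k" using j by auto
  show "Min (cyc p b) \<in> block (setA p (3*m)) (rev X) (k - j + 1)"
    unfolding setA_eq k_def r(1) cyc_min_def[symmetric]
  proof (rule mem_block_rev[OF sum_X j[unfolded k_def] cyc_min_Bs_mem[OF \<open>r < m\<close>]])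
    show "m - sum_list (take j X) < cyc_min p (Bs ! r)"
      using cyc_min_Bs_lower_bound[OF assms(1), of j r] j r(3) unfolding X_def k_def by simp
    show "cyc_min p (Bs ! r) \<le> m - sum_list (take (j - 1) X)"
      using cyc_min_Bs_upper_bound[OF assms(1), of "j - 1" r] \<open>j - 1 < k\<close> r(2) \<open>r < m\<close>
      unfolding X_def k_def by simp
  qed
qed

end
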